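(* Let $X$ be an extremally disconnected topological space satisfying $S_{fin}(s\mathcal{O},s\mathcal{O})$ (i.e. $X$ is semi-Menger). Then Alice (the first player) does not have a winning strategy in the game $G_{fin}(s\mathcal{O},s\mathcal{O})$ played on $X$.
   Context: A subset $A$ of a topological space $X$ is semi-open if $A\subseteq \mathrm{Cl}(\mathrm{Int}(A))$. A semi-open cover of $X$ is a cover of $X$ by semi-open sets; $s\mathcal{O}$ denotes the collection of all semi-open covers of $X$. A space is extremally disconnected if the closure of every open set is open. $X$ satisfies $S_{fin}(s\mathcal{O},s\mathcal{O})$ (is semi-Menger) if for each sequence $\langle\mathcal{U}_n:n\in\omega\rangle$ of semi-open covers of $X$ there is a sequence $\langle\mathcal{V}_n:n\in\omega\rangle$ such that each $\mathcal{V}_n$ is a finite subset of $\mathcal{U}_n$ and $\bigcup_{n}\mathcal{V}_n$ covers $X$. The game $G_{fin}(s\mathcal{O},s\mathcal{O})$ is played by Alice and Bob in innings $n\in\omega$: in inning $n$ Alice chooses a semi-open cover $\mathcal{U}_n$ of $X$ and Bob chooses a finite subset $\mathcal{V}_n\subseteq\mathcal{U}_n$. Bob wins the play if $\bigcup_n\bigcup\mathcal{V}_n=X$; otherwise Alice wins. A strategy for Alice is a rule assigning to each finite sequence of Bob's previous moves a semi-open cover of $X$; it is winning if Alice wins every play in which she follows it. *)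

theory Defs
  imports "HOL-Analysis.Analysis"
begin

definition semi_open :: "'a topology \<Rightarrow> 'a set \<Rightarrow> bool" where
  "semi_open X A \<longleftrightarrow> A \<subseteq> topspace X \<and> A \<subseteq> X closure_of (X interior_of A)"

definition semi_open_covers :: "'a topology \<Rightarrow> 'a set set set" where
  "semi_open_covers X = {\<U>. (\<forall>U\<in>\<U>. semi_open X U) \<and> \<Union>\<U> = topspace X}"

definition extremally_disconnected :: "'a topology \<Rightarrow> bool" where
  "extremally_disconnected X \<longleftrightarrow> (\<forall>U. openin X U \<longrightarrow> openin X (X closure_of U))"

definition semi_Menger :: "'a topology \<Rightarrow> bool" where
  "semi_Menger X \<longleftrightarrow>
     (\<forall>\<U> :: nat \<Rightarrow> 'a set set. (\<forall>n. \<U> n \<in> semi_open_covers X) \<longrightarrow>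
        (\<exists>\<V> :: nat \<Rightarrow> 'a set set. (\<forall>n. finite (\<V> n) \<and> \<V> n \<subseteq> \<U> n) \<and>
                  \<Union>(\<Union>n. \<V> n) = topspace X))"

text \<open>A strategy for Alice in G_fin(sO, sO): to each finite sequence of Bob's previous
  moves (listed in order) it assigns a semi-open cover of X.\<close>
definition alice_strategy :: "'a topology \<Rightarrow> ('a set set list \<Rightarrow> 'a set set) \<Rightarrow> bool" where
  "alice_strategy X \<sigma> \<longleftrightarrow> (\<forall>s. \<sigma> s \<in> semi_open_covers X)"

definition alice_winning_strategy :: "'a topology \<Rightarrow> ('a set set list \<Rightarrow> 'a set set) \<Rightarrow> bool" where
  "alice_winning_strategy X \<sigma> \<longleftrightarrow> alice_strategy X \<sigma> \<and>
     (\<forall>\<V> :: nat \<Rightarrow> 'a set set.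
        (\<forall>n. finite (\<V> n) \<and> \<V> n \<subseteq> \<sigma> (map \<V> [0..<n])) \<longrightarrow>
        \<Union>(\<Union>n. \<V> n) \<noteq> topspace X)"

end

theory Submission
  imports Defs
begin

text \<open>Extremal disconnectedness makes finite intersections of semi-open sets semi-open.
  Fix a strategy \<sigma> for Alice.  By the semi-Menger property every semi-open cover has an
  increasing sequence of finite subfamilies exhausting X, and Bob answers each cover with one
  stage of it; his plays against \<sigma> are thereby coded by sequences of stage indices.  For n and
  b, the points lying in Bob's stage-b(|s|) answer after every index history s of length at
  most n dominated by b form a finite intersection of semi-open sets, and for fixed n these sets
  cover X.  Select finitely many of them for each n and let f n exceed their n-th bounds.  As
  \<sigma> is winning, the play coded by f misses a point x; x lies in a selected set for some n and
  b, and induction along the play gives f i < b i for all i \<le> n, contradicting b n \<le> f n.\<close>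

lemma semi_open_Int:
  assumes ED: "extremally_disconnected X" and A: "semi_open X A" and B: "semi_open X B"
  shows "semi_open X (A \<inter> B)"
proof -
  let ?a = "X interior_of A" and ?b = "X interior_of B"
  have "openin X (X closure_of ?a)"
    using ED by (simp add: extremally_disconnected_def)
  then have "X closure_of ?a \<inter> X closure_of ?b \<subseteq> X closure_of (X closure_of ?a \<inter> ?b)"
    by (rule openin_Int_closure_of_subset)
  also have "X closure_of (X closure_of ?a \<inter> ?b) = X closure_of (?b \<inter> ?a)"
    by (simp add: Int_commute closure_of_openin_Int_closure_of)
  finally have "A \<inter> B \<subseteq> X closure_of (X interior_of (A \<inter> B))"
    using A B by (auto simp: semi_open_def interior_of_Int Int_commute)
  then show ?thesis
    using A by (auto simp: semi_open_def)
qed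

lemma semi_open_Union:
  assumes "\<And>A. A \<in> \<F> \<Longrightarrow> semi_open X A"
  shows "semi_open X (\<Union>\<F>)"
proof -
  have "A \<subseteq> X closure_of (X interior_of (\<Union>\<F>))" if "A \<in> \<F>" for A
  proof -
    have "X closure_of (X interior_of A) \<subseteq> X closure_of (X interior_of (\<Union>\<F>))"
      using that by (intro closure_of_mono interior_of_mono) blast
    then show ?thesis
      using assms[OF that] by (auto simp: semi_open_def)
  qed
  then show ?thesis
    using assms by (auto simp: semi_open_def)
qed

lemma semi_open_topspace: "semi_open X (topspace X)"
  by (simp add: semi_open_def closure_of_topspace interior_of_topspace)

lemma semi_open_Inter_finite:
  assumes ED: "extremally_disconnected X" and "finite I"
    and "\<And>i. i \<in> I \<Longrightarrow> semi_open X (A i)"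
  shows "semi_open X (topspace X \<inter> \<Inter>(A ` I))"
  using assms(2,3)
proof (induction I rule: finite_induct)
  case empty
  then show ?case
    by (simp add: semi_open_topspace)
next
  case (insert i I)
  then have "topspace X \<inter> \<Inter>(A ` insert i I) = A i \<inter> (topspace X \<inter> \<Inter>(A ` I))"
    by (auto simp: semi_open_def)
  then show ?case
    using insert semi_open_Int[OF ED] by simp
qed

text \<open>Such a sequence exists for every semi-open cover of a semi-Menger space (apply the
  selection principle to the constant sequence and take partial unions); for other families the
  value is unspecified.\<close>
definition menger_stage :: "'a topology \<Rightarrow> 'a set set \<Rightarrow> nat \<Rightarrow> 'a set set" where
  "menger_stage X \<U> = (SOME \<V>. mono \<V> \<and> (\<forall>j. finite (\<V> j) \<and> \<V> j \<subseteq> \<U>) \<and>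
     \<Union>(\<Union>j. \<V> j) = topspace X)"

lemma menger_stage:
  assumes "semi_Menger X" and "\<U> \<in> semi_open_covers X"
  shows "mono (menger_stage X \<U>)" "finite (menger_stage X \<U> j)" "menger_stage X \<U> j \<subseteq> \<U>"
    and "\<Union>(\<Union>j. menger_stage X \<U> j) = topspace X"
proof -
  obtain \<W> :: "nat \<Rightarrow> 'a set set" where \<W>: "\<forall>n. finite (\<W> n) \<and> \<W> n \<subseteq> \<U>"
    and cover: "\<Union>(\<Union>n. \<W> n) = topspace X"
    using assms(1)[unfolded semi_Menger_def, rule_format, of "\<lambda>_. \<U>"] assms(2) by auto
  define \<V> where "\<V> j = (\<Union>n\<le>j. \<W> n)" for j
  have "mono \<V>"
    by (auto simp: mono_def \<V>_def intro: order_trans)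
  moreover have "\<forall>j. finite (\<V> j) \<and> \<V> j \<subseteq> \<U>"
    using \<W> by (auto simp: \<V>_def)
  moreover have "(\<Union>j. \<V> j) = (\<Union>n. \<W> n)"
    by (auto simp: \<V>_def)
  ultimately have "\<exists>\<V> :: nat \<Rightarrow> 'a set set. mono \<V> \<and> (\<forall>j. finite (\<V> j) \<and> \<V> j \<subseteq> \<U>) \<and> \<Union>(\<Union>j. \<V> j) = topspace X"
    using cover by metis
  then have "mono (menger_stage X \<U>) \<and> (\<forall>j. finite (menger_stage X \<U> j) \<and> menger_stage X \<U> j \<subseteq> \<U>)
      \<and> \<Union>(\<Union>j. menger_stage X \<U> j) = topspace X"
    unfolding menger_stage_def by (rule someI_ex)
  then show "mono (menger_stage X \<U>)" "finite (menger_stage X \<U> j)" "menger_stage X \<U> j \<subseteq> \<U>"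
    and "\<Union>(\<Union>j. menger_stage X \<U> j) = topspace X"
    by auto
qed

primrec play_history ::
  "'a topology \<Rightarrow> ('a set set list \<Rightarrow> 'a set set) \<Rightarrow> (nat \<Rightarrow> nat) \<Rightarrow> nat \<Rightarrow> 'a set set list" where
  "play_history X \<sigma> f 0 = []"
| "play_history X \<sigma> f (Suc k) =
     play_history X \<sigma> f k @ [menger_stage X (\<sigma> (play_history X \<sigma> f k)) (f k)]"

definition bob_move ::
  "'a topology \<Rightarrow> ('a set set list \<Rightarrow> 'a set set) \<Rightarrow> (nat \<Rightarrow> nat) \<Rightarrow> nat \<Rightarrow> 'a set set" where
  "bob_move X \<sigma> f k = menger_stage X (\<sigma> (play_history X \<sigma> f k)) (f k)"

lemma play_history_eq_map: "play_history X \<sigma> f k = map (bob_move X \<sigma> f) [0..<k]"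
  by (induction k) (simp_all add: bob_move_def)

lemma play_history_cong: "(\<And>i. i < k \<Longrightarrow> f i = g i) \<Longrightarrow> play_history X \<sigma> f k = play_history X \<sigma> g k"
  by (induction k) auto

lemma bob_move_legal:
  assumes "semi_Menger X" and "alice_strategy X \<sigma>"
  shows "finite (bob_move X \<sigma> f k)" "bob_move X \<sigma> f k \<subseteq> \<sigma> (map (bob_move X \<sigma> f) [0..<k])"
proof -
  have "\<sigma> (play_history X \<sigma> f k) \<in> semi_open_covers X"
    using assms(2) by (simp add: alice_strategy_def)
  then show "finite (bob_move X \<sigma> f k)" "bob_move X \<sigma> f k \<subseteq> \<sigma> (map (bob_move X \<sigma> f) [0..<k])"
    using menger_stage(2,3)[OF assms(1)] by (simp_all add: bob_move_def play_history_eq_map[symmetric])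
qed

lemma bob_move_subset_topspace:
  assumes "semi_Menger X" and "alice_strategy X \<sigma>"
  shows "\<Union>(bob_move X \<sigma> f k) \<subseteq> topspace X"
proof -
  have "\<sigma> (play_history X \<sigma> f k) \<in> semi_open_covers X"
    using assms(2) by (simp add: alice_strategy_def)
  then show ?thesis
    using menger_stage(3)[OF assms(1)] unfolding bob_move_def semi_open_covers_def by blast
qed

definition answer_set :: "'a topology \<Rightarrow> ('a set set list \<Rightarrow> 'a set set) \<Rightarrow> nat list \<Rightarrow> nat \<Rightarrow> 'a set" where
  "answer_set X \<sigma> s j = \<Union>(menger_stage X (\<sigma> (play_history X \<sigma> (nth s) (length s))) j)"

lemma
  assumes "semi_Menger X" and "alice_strategy X \<sigma>"
  shows answer_set_semi_open: "semi_open X (answer_set X \<sigma> s j)"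
    and answer_set_mono: "j \<le> j' \<Longrightarrow> answer_set X \<sigma> s j \<subseteq> answer_set X \<sigma> s j'"
    and answer_set_exhausts: "x \<in> topspace X \<Longrightarrow> \<exists>j. x \<in> answer_set X \<sigma> s j"
proof -
  let ?\<U> = "\<sigma> (play_history X \<sigma> (nth s) (length s))"
  have \<U>: "?\<U> \<in> semi_open_covers X"
    using assms(2) by (simp add: alice_strategy_def)
  then show "semi_open X (answer_set X \<sigma> s j)"
    using menger_stage(3)[OF assms(1) \<U>] unfolding answer_set_def semi_open_covers_def
    by (intro semi_open_Union) blast
  show "answer_set X \<sigma> s j \<subseteq> answer_set X \<sigma> s j'" if "j \<le> j'"
    using monoD[OF menger_stage(1)[OF assms(1) \<U>] that] unfolding answer_set_def by blast
  show "\<exists>j. x \<in> answer_set X \<sigma> s j" if "x \<in> topspace X"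
    using menger_stage(4)[OF assms(1) \<U>] that unfolding answer_set_def by blast
qed

lemma answer_set_along_play:
  "answer_set X \<sigma> (map f [0..<i]) j = \<Union>(menger_stage X (\<sigma> (play_history X \<sigma> f i)) j)"
proof -
  have "play_history X \<sigma> (nth (map f [0..<i])) i = play_history X \<sigma> f i"
    by (rule play_history_cong) simp
  then show ?thesis
    by (simp add: answer_set_def)
qed

definition bounded_set :: "'a topology \<Rightarrow> ('a set set list \<Rightarrow> 'a set set) \<Rightarrow> nat \<Rightarrow> (nat \<Rightarrow> nat) \<Rightarrow> 'a set" where
  "bounded_set X \<sigma> n b = {x \<in> topspace X. \<forall>s. length s \<le> n \<longrightarrow> (\<forall>i<length s. s!i < b i) \<longrightarrow>
      x \<in> answer_set X \<sigma> s (b (length s))}"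

lemma finite_dominated_lists: "finite {s :: nat list. length s \<le> n \<and> (\<forall>i<length s. s!i < b i)}"
proof (rule finite_subset)
  show "{s. length s \<le> n \<and> (\<forall>i<length s. s!i < b i)} \<subseteq> {s. set s \<subseteq> {..<Max (b ` {..n})} \<and> length s \<le> n}"
  proof (clarsimp simp: in_set_conv_nth)
    fix s :: "nat list" and i
    assume "length s \<le> n" "\<forall>i<length s. s!i < b i" "i < length s"
    moreover have "b i \<le> Max (b ` {..n})"
      using \<open>length s \<le> n\<close> \<open>i < length s\<close> by (intro Max_ge) auto
    ultimately show "s!i < Max (b ` {..n})"
      by (meson less_le_trans)
  qed
qed (rule finite_lists_length_le, simp)

lemma bounded_set_semi_open:
  assumes "extremally_disconnected X" and "semi_Menger X" and "alice_strategy X \<sigma>"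
  shows "semi_open X (bounded_set X \<sigma> n b)"
proof -
  let ?S = "{s :: nat list. length s \<le> n \<and> (\<forall>i<length s. s!i < b i)}"
  have "bounded_set X \<sigma> n b = topspace X \<inter> \<Inter>((\<lambda>s. answer_set X \<sigma> s (b (length s))) ` ?S)"
    by (auto simp: bounded_set_def)
  then show ?thesis
    using semi_open_Inter_finite[OF assms(1) finite_dominated_lists] answer_set_semi_open[OF assms(2,3)]
    by simp
qed

primrec dominating_bound :: "(nat list \<Rightarrow> nat) \<Rightarrow> nat \<Rightarrow> nat" where
  "dominating_bound g 0 = g []"
| "dominating_bound g (Suc k) = max (dominating_bound g k)
     (Max (insert 0 (g ` {s. set s \<subseteq> {..<dominating_bound g k} \<and> length s = Suc k})))"

lemma dominating_bound_mono: "i \<le> k \<Longrightarrow> dominating_bound g i \<le> dominating_bound g k"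
  by (rule lift_Suc_mono_le[of "dominating_bound g"]) auto

lemma dominating_bound_ge:
  assumes "\<forall>i<length s. s!i < dominating_bound g i"
  shows "g s \<le> dominating_bound g (length s)"
proof (cases s rule: rev_cases)
  case Nil
  then show ?thesis by simp
next
  case (snoc ys y)
  define k where "k = length ys"
  have len: "length s = Suc k"
    using snoc k_def by simp
  have "set s \<subseteq> {..<dominating_bound g k}"
  proof
    fix z assume "z \<in> set s"
    then obtain i where i: "i < length s" "s!i = z"
      by (metis in_set_conv_nth)
    have "dominating_bound g i \<le> dominating_bound g k"
      using i len by (intro dominating_bound_mono) simp
    then show "z \<in> {..<dominating_bound g k}"
      using i assms by fastforce
  qed
  then have "s \<in> {s. set s \<subseteq> {..<dominating_bound g k} \<and> length s = Suc k}"
    using len by simp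
  moreover have "finite {s. set s \<subseteq> {..<dominating_bound g k} \<and> length s = Suc k}"
    by (rule finite_lists_length_eq) simp
  ultimately have "g s \<le> Max (insert 0 (g ` {s. set s \<subseteq> {..<dominating_bound g k} \<and> length s = Suc k}))"
    by (intro Max_ge) auto
  then show ?thesis
    unfolding len by simp
qed

lemma bounded_sets_cover:
  assumes "extremally_disconnected X" and "semi_Menger X" and "alice_strategy X \<sigma>"
  shows "range (bounded_set X \<sigma> n) \<in> semi_open_covers X"
proof -
  have "\<exists>b. x \<in> bounded_set X \<sigma> n b" if x: "x \<in> topspace X" for x
  proof -
    define g where "g s = (LEAST j. x \<in> answer_set X \<sigma> s j)" for s
    have "x \<in> answer_set X \<sigma> s (g s)" for s
      unfolding g_def using answer_set_exhausts[OF assms(2,3) x] by (rule LeastI_ex)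
    then have "x \<in> answer_set X \<sigma> s (dominating_bound g (length s))"
      if "\<forall>i<length s. s!i < dominating_bound g i" for s
      using answer_set_mono[OF assms(2,3) dominating_bound_ge[OF that]] by blast
    then show ?thesis
      using x by (auto simp: bounded_set_def)
  qed
  then show ?thesis
    using bounded_set_semi_open[OF assms]
    by (auto simp: semi_open_covers_def bounded_set_def)
qed

text \<open>If f j < b j for j < i, then x lies in the stage-b i answer of inning i but not in
  Bob's actual move, its stage-f i answer; as the stages increase, f i < b i.\<close>
lemma escaping_point_dominates:
  assumes "semi_Menger X" and "alice_strategy X \<sigma>"
    and x: "x \<in> bounded_set X \<sigma> n b" and escape: "\<forall>i. x \<notin> \<Union>(bob_move X \<sigma> f i)"
  shows "i \<le> n \<Longrightarrow> f i < b i"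
proof (induction i rule: less_induct)
  case (less i)
  have x_answers: "x \<in> answer_set X \<sigma> s (b (length s))"
    if "length s \<le> n" "\<forall>i<length s. s!i < b i" for s
    using x that by (simp add: bounded_set_def)
  have "x \<in> answer_set X \<sigma> (map f [0..<i]) (b i)"
    using x_answers[of "map f [0..<i]"] less by simp
  moreover have "x \<notin> answer_set X \<sigma> (map f [0..<i]) (f i)"
    using escape by (simp add: answer_set_along_play bob_move_def)
  ultimately show "f i < b i"
    using answer_set_mono[OF assms(1,2)] by (meson not_le subsetD)
qed

lemma bob_play_misses_point:
  assumes "semi_Menger X" and "alice_winning_strategy X \<sigma>"
  obtains x where "x \<in> topspace X" and "\<forall>i. x \<notin> \<Union>(bob_move X \<sigma> f i)"
proof -
  have \<sigma>: "alice_strategy X \<sigma>"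
    using assms(2) by (simp add: alice_winning_strategy_def)
  have "\<Union>(\<Union>k. bob_move X \<sigma> f k) \<noteq> topspace X"
    using assms(2) bob_move_legal[OF assms(1) \<sigma>] by (simp add: alice_winning_strategy_def)
  moreover have "\<Union>(\<Union>k. bob_move X \<sigma> f k) \<subseteq> topspace X"
    using bob_move_subset_topspace[OF assms(1) \<sigma>, of f] by auto
  ultimately obtain x where "x \<in> topspace X" and "x \<notin> \<Union>(\<Union>k. bob_move X \<sigma> f k)"
    by blast
  then show ?thesis
    using that by blast
qed

lemma finite_subfamilies_dominated:
  fixes B :: "nat \<Rightarrow> (nat \<Rightarrow> nat) \<Rightarrow> 'b"
  assumes "\<And>n. finite (\<F> n)" and "\<And>n. \<F> n \<subseteq> range (B n)"
  shows "\<exists>f. \<forall>n. \<forall>W\<in>\<F> n. \<exists>b. W = B n b \<and> b n \<le> f n"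
proof -
  let ?index = "\<lambda>n W. inv_into UNIV (B n) W"
  define f where "f n = Max (insert 0 ((\<lambda>W. ?index n W n) ` \<F> n))" for n
  have "W = B n (?index n W)" if "W \<in> \<F> n" for n W
    using assms(2) that by (metis f_inv_into_f subsetD)
  moreover have "?index n W n \<le> f n" if "W \<in> \<F> n" for n W
    unfolding f_def using assms(1) that by simp
  ultimately show ?thesis
    by blast
qed

theorem mainTheorem1:
  fixes X :: "'a topology"
  assumes "extremally_disconnected X"
    and "semi_Menger X"
  shows "\<not> (\<exists>\<sigma>. alice_winning_strategy X \<sigma>)"
proof
  assume "\<exists>\<sigma>. alice_winning_strategy X \<sigma>"
  then obtain \<sigma> where wins: "alice_winning_strategy X \<sigma>"
    by blast
  then have \<sigma>: "alice_strategy X \<sigma>"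
    by (simp add: alice_winning_strategy_def)
  obtain \<F> where \<F>: "\<forall>n. finite (\<F> n) \<and> \<F> n \<subseteq> range (bounded_set X \<sigma> n)"
    and \<F>_cover: "\<Union>(\<Union>n. \<F> n) = topspace X"
    using assms(2)[unfolded semi_Menger_def, rule_format, of "\<lambda>n. range (bounded_set X \<sigma> n)"]
      bounded_sets_cover[OF assms \<sigma>] by auto
  obtain f where f: "\<forall>n. \<forall>W\<in>\<F> n. \<exists>b. W = bounded_set X \<sigma> n b \<and> b n \<le> f n"
    using finite_subfamilies_dominated[of \<F> "bounded_set X \<sigma>"] \<F> by blast
  obtain x where "x \<in> topspace X" and escape: "\<forall>i. x \<notin> \<Union>(bob_move X \<sigma> f i)"
    using bob_play_misses_point[OF assms(2) wins] .
  then obtain n W where "W \<in> \<F> n" and "x \<in> W"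
    using \<F>_cover by blast
  then obtain b where b: "x \<in> bounded_set X \<sigma> n b" and "b n \<le> f n"
    using f by blast
  moreover have "f n < b n"
    using escaping_point_dominates[OF assms(2) \<sigma> b escape, of n] by simp
  ultimately show False
    by simp
qed

end
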